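(* Let $A$ be an archimedean $*$-algebra, $x\in A_+$, and $\bar x$ its image in $C^*(A)$. Then $\bar x$ is invertible in $C^*(A)$ if and only if there exists a positive rational $\alpha$ with $x-\alpha\in A_+$.
   Context: A $*$-algebra is a unital algebra over $\mathbb{Q}$ with a $\mathbb{Q}$-linear involution $x\mapsto x^*$ satisfying $(xy)^*=y^*x^*$; rational scalars are identified with multiples of the unit. $A_+=\{\sum_{i=1}^n x_i^*x_i: n\in\mathbb{N},x_i\in A\}$, and $x\leq y$ means $y-x\in A_+$. For $x\in A$, $\|x\|=\sqrt{\inf\{\alpha\in\mathbb{Q}_{>0}: x^*x\leq\alpha\}}\in[0,\infty]$; $A_i=\{x:\|x\|=0\}$. $A$ is archimedean if $-1\notin A_+$ and $\|x\|<\infty$ for all $x$. $C^*(A)=\mathbb{C}\otimes_{\mathbb{R}}C^*_{\mathbb{R}}(A)$, where $C^*_{\mathbb{R}}(A)$ is the completion of $A/A_i$ with respect to the norm induced by $\|\cdot\|$. *)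

theory Defs
  imports Complex_Main "HOL-Library.Extended_Real"
begin

text \<open>The rational alpha is identified with sm alpha 1.\<close>

definition star_alg :: "(rat \<Rightarrow> 'a::ring_1 \<Rightarrow> 'a) \<Rightarrow> ('a \<Rightarrow> 'a) \<Rightarrow> bool" where
  "star_alg sm st \<longleftrightarrow>
     (\<forall>a x y. sm a (x + y) = sm a x + sm a y) \<and>
     (\<forall>a b x. sm (a + b) x = sm a x + sm b x) \<and>
     (\<forall>a b x. sm (a * b) x = sm a (sm b x)) \<and>
     (\<forall>x. sm 1 x = x) \<and>
     (\<forall>a x y. sm a (x * y) = sm a x * y) \<and>
     (\<forall>a x y. sm a (x * y) = x * sm a y) \<and>
     (\<forall>x y. st (x + y) = st x + st y) \<and>
     (\<forall>a x. st (sm a x) = sm a (st x)) \<and>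
     (\<forall>x. st (st x) = x) \<and>
     (\<forall>x y. st (x * y) = st y * st x)"

definition sa_pos :: "('a \<Rightarrow> 'a) \<Rightarrow> 'a::ring_1 \<Rightarrow> bool" where
  "sa_pos st x \<longleftrightarrow> (\<exists>xs :: 'a list. x = sum_list (map (\<lambda>y. st y * y) xs))"

definition sa_le :: "('a \<Rightarrow> 'a) \<Rightarrow> 'a::ring_1 \<Rightarrow> 'a \<Rightarrow> bool" where
  "sa_le st x y \<longleftrightarrow> sa_pos st (y - x)"

definition sa_normsq :: "(rat \<Rightarrow> 'a \<Rightarrow> 'a) \<Rightarrow> ('a \<Rightarrow> 'a) \<Rightarrow> 'a::ring_1 \<Rightarrow> ereal" where
  "sa_normsq sm st x = Inf {ereal (real_of_rat \<alpha>) | \<alpha>. \<alpha> > 0 \<and> sa_le st (st x * x) (sm \<alpha> 1)}"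

definition sa_archimedean :: "(rat \<Rightarrow> 'a::ring_1 \<Rightarrow> 'a) \<Rightarrow> ('a \<Rightarrow> 'a) \<Rightarrow> bool" where
  "sa_archimedean sm st \<longleftrightarrow> \<not> sa_pos st (-(1::'a)) \<and> (\<forall>x::'a. sa_normsq sm st x < \<infinity>)"

text \<open>The norm ||x|| (as a real number; it is finite for archimedean A, which is
  the only situation in which it is used below).\<close>
definition sa_norm :: "(rat \<Rightarrow> 'a \<Rightarrow> 'a) \<Rightarrow> ('a \<Rightarrow> 'a) \<Rightarrow> 'a::ring_1 \<Rightarrow> real" where
  "sa_norm sm st x = sqrt (real_of_ereal (sa_normsq sm st x))"

text \<open>Cauchy sequences in A w.r.t. the (semi)norm: representatives of elements of
  C^*_R(A), the completion of A/A_i.\<close>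
definition sa_cauchy :: "(rat \<Rightarrow> 'a \<Rightarrow> 'a) \<Rightarrow> ('a \<Rightarrow> 'a) \<Rightarrow> (nat \<Rightarrow> 'a::ring_1) \<Rightarrow> bool" where
  "sa_cauchy sm st u \<longleftrightarrow>
     (\<forall>e>0. \<exists>N. \<forall>m\<ge>N. \<forall>n\<ge>N. sa_norm sm st (u m - u n) < e)"

text \<open>Invertibility of the image of x in C^*(A) = C \<otimes>_R C^*_R(A), unfolded:
  an element of C^*(A) is a + i b with a, b in C^*_R(A), represented by Cauchy
  sequences; the image of x is [const x] + i 0, the unit is [const 1] + i 0;
  products are computed termwise, and two classes agree iff the norm of the
  difference of representatives tends to 0. So x-bar is invertible iff there
  are a, b in C^*_R(A) with x a = 1, x b = 0, a x = 1, b x = 0.\<close>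
definition cstar_invertible :: "(rat \<Rightarrow> 'a \<Rightarrow> 'a) \<Rightarrow> ('a \<Rightarrow> 'a) \<Rightarrow> 'a::ring_1 \<Rightarrow> bool" where
  "cstar_invertible sm st x \<longleftrightarrow>
     (\<exists>a b :: nat \<Rightarrow> 'a. sa_cauchy sm st a \<and> sa_cauchy sm st b \<and>
        (\<lambda>n. sa_norm sm st (x * a n - 1)) \<longlonglongrightarrow> 0 \<and>
        (\<lambda>n. sa_norm sm st (a n * x - 1)) \<longlonglongrightarrow> 0 \<and>
        (\<lambda>n. sa_norm sm st (x * b n)) \<longlonglongrightarrow> 0 \<and>
        (\<lambda>n. sa_norm sm st (b n * x)) \<longlonglongrightarrow> 0)"

end

theory Submission
  imports Defs
begin

text \<open>If \<open>x\<close> is invertible in \<open>C\<^sup>*(A)\<close>, some \<open>b \<in> A\<close> satisfies \<open>\<parallel>b x - 1\<parallel> < 1/2\<close>, which forces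
  \<open>(b x)\<^sup>* (b x) \<ge> 1/4\<close>; as \<open>x b\<^sup>* b x \<le> K x\<^sup>2\<close>, the square \<open>x\<^sup>2\<close> is bounded below by a positive
  rational, and so is \<open>x\<close>. Conversely, if \<open>\<alpha> \<le> x \<le> L\<close>, then \<open>x = L (1 - y)\<close> with
  \<open>0 \<le> y \<le> 1 - \<alpha>/L < 1\<close>, so \<open>\<parallel>y\<^sup>n\<parallel>\<close> decays geometrically and the Neumann series inverts \<open>x\<close>.\<close>

lemma geometric_tail_le:
  fixes r :: "'a::linordered_field"
  assumes "0 \<le> r" "r < 1" "n \<le> m"
  shows "(\<Sum>k\<in>{n..<m}. r ^ k) \<le> r ^ n / (1 - r)"
proof -
  have "(\<Sum>k\<in>{n..<m}. r ^ k) = (\<Sum>k<m. r ^ k) - (\<Sum>k<n. r ^ k)"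
    using sum.atLeastLessThan_concat[of 0 n m "\<lambda>k. r ^ k"] assms(3)
    by (simp add: atLeast0LessThan)
  also have "\<dots> = (r ^ n - r ^ m) / (1 - r)"
    using assms(2) by (simp add: sum_gp_strict diff_divide_distrib)
  also have "\<dots> \<le> r ^ n / (1 - r)"
    using assms(1,2) by (simp add: divide_right_mono)
  finally show ?thesis .
qed

locale star_algebra =
  fixes sm :: "rat \<Rightarrow> 'a::ring_1 \<Rightarrow> 'a" and st :: "'a \<Rightarrow> 'a"
  assumes star_alg: "star_alg sm st"
begin

lemma sm_add: "sm a (x + y) = sm a x + sm a y"
  and sm_add_scalar: "sm (a + b) x = sm a x + sm b x"
  and sm_mult_scalar: "sm (a * b) x = sm a (sm b x)"
  and sm_one_scalar: "sm 1 x = x"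
  and sm_mult_left: "sm a (x * y) = sm a x * y"
  and sm_mult_right: "sm a (x * y) = x * sm a y"
  and st_add: "st (x + y) = st x + st y"
  and st_sm: "st (sm a x) = sm a (st x)"
  and st_st: "st (st x) = x"
  and st_mult: "st (x * y) = st y * st x"
  by (insert star_alg[unfolded star_alg_def]) (elim conjE; metis)+

lemma sm_zero_scalar: "sm 0 x = 0"
  using sm_add_scalar[of 0 0 x] by simp

lemma sm_zero: "sm a 0 = 0"
  using sm_add[of a 0 0] by simp

lemma sm_diff: "sm a (x - y) = sm a x - sm a y"
  using sm_add[of a "x - y" y] by (simp add: eq_diff_eq)

lemma sm_diff_scalar: "sm (a - b) x = sm a x - sm b x"
  using sm_add_scalar[of "a - b" b x] by (simp add: eq_diff_eq)

lemma sm_inverse_cancel: "g \<noteq> 0 \<Longrightarrow> sm (1 / g) (sm g w) = w"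
  by (simp add: sm_mult_scalar[symmetric] sm_one_scalar)

lemma sm_of_nat_scalar: "sm (of_nat n) x = of_nat n * x"
  by (induction n) (simp_all add: sm_zero_scalar sm_add_scalar sm_one_scalar distrib_right)

lemma sm_eq_mult_const: "sm a x = x * sm a 1"
  using sm_mult_right[of a x 1] by simp

lemma const_commute: "sm a 1 * x = x * sm a 1"
proof -
  have "sm a 1 * x = sm a x"
    using sm_mult_left[of a 1 x] by simp
  also have "\<dots> = x * sm a 1"
    by (rule sm_eq_mult_const)
  finally show ?thesis .
qed

lemma st_zero: "st 0 = 0"
  using st_add[of 0 0] by simp

lemma st_diff: "st (x - y) = st x - st y"
  using st_add[of "x - y" y] by (simp add: eq_diff_eq)

lemma st_one: "st 1 = 1"
  using st_mult[of "st 1" 1] st_st by simp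

lemma st_sum_list: "st (sum_list xs) = sum_list (map st xs)"
  by (induction xs) (simp_all add: st_zero st_add)

lemma st_power: "st y = y \<Longrightarrow> st (y ^ k) = y ^ k"
  by (induction k) (simp_all add: st_one st_mult power_commutes)

lemma sum_sm_scalar: "(\<Sum>k\<in>A. sm (g k) w) = sm (sum g A) w"
  by (induction A rule: infinite_finite_induct) (auto simp: sm_zero_scalar sm_add_scalar)

lemma one_minus_mult_geometric_sum:
  fixes y :: 'a
  shows "(1 - y) * (\<Sum>k<n. y ^ k) = 1 - y ^ n" and "(\<Sum>k<n. y ^ k) * (1 - y) = 1 - y ^ n"
proof -
  show right: "(\<Sum>k<n. y ^ k) * (1 - y) = 1 - y ^ n"
  proof (induction n)
    case (Suc n)
    have "(\<Sum>k<Suc n. y ^ k) * (1 - y) = (\<Sum>k<n. y ^ k) * (1 - y) + y ^ n * (1 - y)"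
      by (simp add: distrib_right)
    with Suc show ?case
      by (simp add: right_diff_distrib power_Suc2 del: power_Suc)
  qed simp
  have "y * (\<Sum>k<n. y ^ k) = (\<Sum>k<n. y ^ k) * y"
    by (simp add: sum_distrib_left sum_distrib_right power_commutes)
  with right show "(1 - y) * (\<Sum>k<n. y ^ k) = 1 - y ^ n"
    by (simp add: algebra_simps)
qed

lemma sa_pos_hermitian: "sa_pos st p \<Longrightarrow> st p = p"
  unfolding sa_pos_def by (auto simp: st_sum_list o_def st_mult st_st)

lemma sa_pos_zero: "sa_pos st 0"
  unfolding sa_pos_def by (rule exI[of _ "[]"]) simp

lemma sa_pos_hermitian_square: "sa_pos st (st z * z)"
  unfolding sa_pos_def by (rule exI[of _ "[z]"]) simp

lemma sa_pos_add: "sa_pos st p \<Longrightarrow> sa_pos st q \<Longrightarrow> sa_pos st (p + q)"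
  unfolding sa_pos_def by (metis map_append sum_list_append)

lemma sa_pos_sum: "(\<And>k. k \<in> A \<Longrightarrow> sa_pos st (f k)) \<Longrightarrow> sa_pos st (sum f A)"
  by (induction A rule: infinite_finite_induct) (auto simp: sa_pos_zero sa_pos_add)

lemma sa_pos_conj:
  assumes "sa_pos st p"
  shows "sa_pos st (st z * p * z)"
proof -
  obtain xs where p: "p = sum_list (map (\<lambda>y. st y * y) xs)"
    using assms sa_pos_def by blast
  have "st z * p * z = sum_list (map (\<lambda>y. st y * y) (map (\<lambda>y. y * z) xs))"
    unfolding p by (induction xs) (simp_all add: st_mult algebra_simps)
  then show ?thesis
    unfolding sa_pos_def by blast
qed

text \<open>A nonnegative rational is \<open>n / q\<^sup>2\<close> with \<open>n\<close> natural, so \<open>r y\<^sup>* y\<close> is a sum of \<open>n\<close>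
  copies of \<open>u\<^sup>* u\<close> with \<open>u = y / q\<close>.\<close>

lemma sa_pos_sm_hermitian_square:
  assumes "r \<ge> 0"
  shows "sa_pos st (sm r (st y * y))"
proof -
  obtain p q where pq: "quotient_of r = (p, q)"
    by (cases "quotient_of r")
  have r: "r = of_int p / of_int q" and q: "q > 0"
    using pq quotient_of_div quotient_of_denom_pos by blast+
  have "p \<ge> 0"
    using assms r q by (simp add: zero_le_divide_iff)
  define n where "n = nat (p * q)"
  have rn: "r = of_nat n * (1 / of_int q * (1 / of_int q))"
    using r q \<open>p \<ge> 0\<close> by (simp add: n_def field_simps)
  define u where "u = sm (1 / of_int q) y"
  have "st u * u = sm (1 / of_int q * (1 / of_int q)) (st y * y)"
    unfolding u_def st_sm sm_mult_scalar by (metis sm_mult_left sm_mult_right)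
  then have "sm r (st y * y) = of_nat n * (st u * u)"
    unfolding rn sm_mult_scalar sm_of_nat_scalar by simp
  also have "\<dots> = sum_list (map (\<lambda>y. st y * y) (replicate n u))"
    by (simp add: sum_list_replicate)
  finally show ?thesis
    unfolding sa_pos_def by blast
qed

lemma sa_pos_sm:
  assumes "sa_pos st p" and "r \<ge> 0"
  shows "sa_pos st (sm r p)"
proof -
  obtain xs where p: "p = sum_list (map (\<lambda>y. st y * y) xs)"
    using assms sa_pos_def by blast
  show ?thesis
    unfolding p
    by (induction xs) (simp_all add: sm_zero sm_add sa_pos_zero sa_pos_add sa_pos_sm_hermitian_square assms)
qed

lemma sa_pos_const: "r \<ge> 0 \<Longrightarrow> sa_pos st (sm r 1)"
  using sa_pos_sm_hermitian_square[of r 1] st_one by simp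

lemma sa_pos_sm_cancel: "g > 0 \<Longrightarrow> sa_pos st (sm g w) \<Longrightarrow> sa_pos st w"
  using sa_pos_sm[of "sm g w" "1 / g"] sm_inverse_cancel[of g w] by simp

text \<open>Since \<open>y\<close> commutes with \<open>g - y\<close>, \<open>(g - y) y (g - y) + y (g - y) y = g y (g - y)\<close>.\<close>

lemma sa_pos_mult_const_minus:
  assumes y: "sa_pos st y" and gy: "sa_pos st (sm g 1 - y)" and g: "g > 0"
  shows "sa_pos st (y * (sm g 1 - y))"
proof -
  define c where "c = sm g 1"
  have "st y = y" and "st (c - y) = c - y"
    using sa_pos_hermitian y gy c_def by blast+
  then have "sa_pos st ((c - y) * y * (c - y) + y * (c - y) * y)"
    using sa_pos_add sa_pos_conj[OF y, of "c - y"] sa_pos_conj[OF gy, of y] c_def by simp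
  moreover have "y * (c - y) = (c - y) * y"
    using const_commute[of g y] by (simp add: c_def algebra_simps)
  then have "(c - y) * y * (c - y) + y * (c - y) * y = y * (c - y) * ((c - y) + y)"
    by (simp add: algebra_simps)
  also have "\<dots> = sm g (y * (c - y))"
    by (simp add: c_def sm_eq_mult_const[of g "y * (sm g 1 - y)"])
  ultimately show ?thesis
    using sa_pos_sm_cancel g c_def by simp
qed

lemma sa_pos_even_power_mult:
  assumes y: "st y = y" and w: "sa_pos st w" and comm: "y * w = w * y"
  shows "sa_pos st (y ^ (2 * j) * w)"
proof -
  have "st (y ^ j) * w * y ^ j = y ^ j * (w * y ^ j)"
    by (simp add: st_power[OF y] mult.assoc)
  also have "\<dots> = (y ^ j * y ^ j) * w"
    using power_commuting_commutes[OF comm, of j] by (simp add: mult.assoc)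
  also have "\<dots> = y ^ (2 * j) * w"
    by (simp only: mult_2 power_add)
  finally show ?thesis
    using sa_pos_conj[OF w, of "y ^ j"] by simp
qed

lemma sa_pos_power_mult:
  assumes y: "sa_pos st y" and w: "sa_pos st w" and yw: "sa_pos st (y * w)"
    and comm: "y * w = w * y"
  shows "sa_pos st (y ^ k * w)"
proof -
  have hy: "st y = y"
    using sa_pos_hermitian y by blast
  obtain j where "k = 2 * j \<or> k = Suc (2 * j)"
    by (metis oddE evenE Suc_eq_plus1)
  then show ?thesis
  proof
    assume "k = 2 * j"
    then show ?thesis
      using sa_pos_even_power_mult[OF hy w comm] by simp
  next
    assume "k = Suc (2 * j)"
    moreover have "y * (y * w) = (y * w) * y"
      using comm by (metis mult.assoc)
    moreover have "y ^ Suc (2 * j) * w = y ^ (2 * j) * (y * w)"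
      by (simp add: power_Suc2 mult.assoc del: power_Suc)
    ultimately show ?thesis
      using sa_pos_even_power_mult[OF hy yw] by simp
  qed
qed

lemma sa_pos_power: "sa_pos st y \<Longrightarrow> sa_pos st (y ^ k)"
  using sa_pos_power_mult[of y 1 k] sa_pos_const[of 1] by (simp add: sm_one_scalar)

text \<open>\<open>r\<^sup>k\<^sup>+\<^sup>1 - y\<^sup>k\<^sup>+\<^sup>1 = r (r\<^sup>k - y\<^sup>k) + y\<^sup>k (r - y)\<close>, and \<open>y\<^sup>k (r - y) \<ge> 0\<close> because
  \<open>y (r - y) \<ge> 0\<close> commutes with \<open>y\<close>.\<close>

lemma sa_pos_const_power_minus_power:
  assumes y: "sa_pos st y" and ry: "sa_pos st (sm r 1 - y)" and r: "r > 0"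
  shows "sa_pos st (sm (r ^ k) 1 - y ^ k)"
proof (induction k)
  case 0
  then show ?case
    using sa_pos_zero by (simp add: sm_one_scalar)
next
  case (Suc k)
  have comm: "y * (sm r 1 - y) = (sm r 1 - y) * y"
    using const_commute[of r y] by (simp add: algebra_simps)
  have "sa_pos st (y ^ k * (sm r 1 - y))"
    using sa_pos_power_mult[OF y ry sa_pos_mult_const_minus[OF y ry r] comm] .
  moreover have "sa_pos st (sm r (sm (r ^ k) 1 - y ^ k))"
    using sa_pos_sm Suc r by simp
  moreover have "y ^ k * (sm r 1 - y) = sm r (y ^ k) - y ^ Suc k"
    by (simp add: right_diff_distrib power_Suc2 power_commutes
        sm_eq_mult_const[of r "y ^ k", symmetric])
  then have "sm r (sm (r ^ k) 1 - y ^ k) + y ^ k * (sm r 1 - y) = sm (r ^ Suc k) 1 - y ^ Suc k"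
    by (simp add: sm_diff sm_mult_scalar[symmetric] mult.commute)
  ultimately show ?case
    using sa_pos_add by metis
qed

lemma sa_normsq_nonneg: "0 \<le> sa_normsq sm st z"
  unfolding sa_normsq_def by (rule Inf_greatest) auto

lemma sa_norm_nonneg: "sa_norm sm st z \<ge> 0"
  unfolding sa_norm_def using sa_normsq_nonneg[of z] real_of_ereal_pos by simp

lemma sa_norm_minus: "sa_norm sm st (- z) = sa_norm sm st z"
  unfolding sa_norm_def sa_normsq_def by (simp add: st_diff[of 0 z, simplified] st_zero)

lemma sa_norm_le_sqrt_const:
  assumes "g > 0" and "sa_pos st (sm g 1 - st z * z)"
  shows "sa_norm sm st z \<le> sqrt (real_of_rat g)"
proof -
  have "sa_normsq sm st z \<le> ereal (real_of_rat g)"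
    unfolding sa_normsq_def sa_le_def by (rule Inf_lower) (use assms in blast)
  then obtain t where "sa_normsq sm st z = ereal t" "t \<le> real_of_rat g"
    using sa_normsq_nonneg[of z] by (cases "sa_normsq sm st z") auto
  then show ?thesis
    unfolding sa_norm_def by simp
qed

lemma sa_norm_le_of_pos_bound:
  assumes z: "sa_pos st z" and r: "r > 0" and rz: "sa_pos st (sm r 1 - z)"
  shows "sa_norm sm st z \<le> real_of_rat r"
proof -
  have "z * (sm r 1 - z) + sm r (sm r 1 - z) = sm (r * r) 1 - st z * z"
    by (simp add: sa_pos_hermitian[OF z] sm_diff sm_mult_scalar algebra_simps
        sm_eq_mult_const[of r z, symmetric])
  moreover have "sa_pos st (z * (sm r 1 - z) + sm r (sm r 1 - z))"
    using sa_pos_add sa_pos_mult_const_minus[OF z rz r] sa_pos_sm[OF rz] r by simp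
  ultimately have "sa_norm sm st z \<le> sqrt (real_of_rat (r * r))"
    using sa_norm_le_sqrt_const r by simp
  also have "\<dots> = real_of_rat r"
    using r by (simp add: of_rat_mult)
  finally show ?thesis .
qed

lemma sa_norm_zero: "sa_norm sm st 0 = 0"
proof (rule antisym[OF _ sa_norm_nonneg], rule ccontr)
  assume "\<not> sa_norm sm st 0 \<le> 0"
  then obtain r where "0 < real_of_rat r" "real_of_rat r < sa_norm sm st 0"
    using of_rat_dense by (metis not_le)
  moreover have "sa_norm sm st 0 \<le> real_of_rat r"
    using sa_norm_le_of_pos_bound[of 0 r] sa_pos_zero sa_pos_const[of r] calculation(1) by simp
  ultimately show False
    by simp
qed

lemma sa_cauchyI:
  assumes "g \<longlonglongrightarrow> 0" and dist: "\<And>m n. n \<le> m \<Longrightarrow> sa_norm sm st (u m - u n) \<le> g n"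
  shows "sa_cauchy sm st u"
  unfolding sa_cauchy_def
proof (intro allI impI)
  fix e :: real
  assume "e > 0"
  with assms(1) have "eventually (\<lambda>n. g n < e) sequentially"
    by (rule order_tendstoD(2))
  then obtain N where N: "\<And>n. n \<ge> N \<Longrightarrow> g n < e"
    by (auto simp: eventually_sequentially)
  have "sa_norm sm st (u m - u n) < e" if "m \<ge> N" "n \<ge> N" for m n
  proof (cases "n \<le> m")
    case True
    then show ?thesis
      using dist N that(2) by (meson order.trans le_less_trans)
  next
    case False
    then have "sa_norm sm st (u n - u m) \<le> g m"
      using dist by simp
    moreover have "sa_norm sm st (u m - u n) = sa_norm sm st (u n - u m)"
      using sa_norm_minus[of "u n - u m"] by simp
    ultimately show ?thesis
      using N[OF that(1)] by simp
  qed
  then show "\<exists>N. \<forall>m\<ge>N. \<forall>n\<ge>N. sa_norm sm st (u m - u n) < e"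
    by blast
qed

lemma sa_norm_power_tendsto_zero:
  assumes y: "sa_pos st y" and ry: "sa_pos st (sm r 1 - y)" and r: "0 < r" "r < 1"
  shows "(\<lambda>n. sa_norm sm st (y ^ n)) \<longlonglongrightarrow> 0"
proof (rule real_tendsto_sandwich[where f = "\<lambda>n. 0" and h = "\<lambda>n. real_of_rat r ^ n"])
  show "\<forall>\<^sub>F n in sequentially. 0 \<le> sa_norm sm st (y ^ n)"
    by (simp add: sa_norm_nonneg)
  show "\<forall>\<^sub>F n in sequentially. sa_norm sm st (y ^ n) \<le> real_of_rat r ^ n"
    using sa_norm_le_of_pos_bound[OF sa_pos_power[OF y] _ sa_pos_const_power_minus_power[OF y ry r(1)]]
      r
    by (simp add: of_rat_power)
  show "(\<lambda>n. real_of_rat r ^ n) \<longlonglongrightarrow> 0"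
    using r by (intro LIMSEQ_power_zero) simp
qed simp

lemma sa_norm_sm_geometric_tail_le:
  assumes y: "sa_pos st y" and ry: "sa_pos st (sm r 1 - y)" and r: "0 < r" "r < 1"
    and c: "c > 0" and "n \<le> m"
  shows "sa_norm sm st (sm c (\<Sum>k\<in>{n..<m}. y ^ k)) \<le> real_of_rat (c * r ^ n / (1 - r))"
proof -
  define T where "T = (\<Sum>k\<in>{n..<m}. y ^ k)"
  define R where "R = (\<Sum>k\<in>{n..<m}. r ^ k)"
  define \<rho> where "\<rho> = c * r ^ n / (1 - r)"
  have T: "sa_pos st T"
    unfolding T_def by (rule sa_pos_sum) (rule sa_pos_power[OF y])
  have "sm R 1 - T = (\<Sum>k\<in>{n..<m}. sm (r ^ k) 1 - y ^ k)"
    unfolding R_def T_def sum_subtractf sum_sm_scalar ..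
  then have RT: "sa_pos st (sm R 1 - T)"
    using sa_pos_sum[of "{n..<m}"] sa_pos_const_power_minus_power[OF y ry r(1)] by simp
  have "c * R \<le> \<rho>"
    using mult_left_mono[OF geometric_tail_le[OF _ r(2) \<open>n \<le> m\<close>], of c] r c
    by (simp add: R_def \<rho>_def)
  moreover have "sm \<rho> 1 - sm c T = sm c (sm R 1 - T) + sm (\<rho> - c * R) 1"
    by (simp add: sm_diff sm_diff_scalar flip: sm_mult_scalar)
  ultimately have "sa_pos st (sm \<rho> 1 - sm c T)"
    using sa_pos_add[OF sa_pos_sm[OF RT] sa_pos_const] c by simp
  moreover have "\<rho> > 0"
    using r c by (simp add: \<rho>_def)
  ultimately show ?thesis
    using sa_norm_le_of_pos_bound sa_pos_sm[OF T] c unfolding T_def \<rho>_def by simp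
qed

text \<open>The real part of the inverse is the Neumann series \<open>L\<^sup>-\<^sup>1 \<Sum> y\<^sup>k\<close>, its imaginary part is 0.\<close>

lemma cstar_invertible_sm_one_minus:
  assumes y: "sa_pos st y" and ry: "sa_pos st (sm r 1 - y)" and r: "0 < r" "r < 1" and L: "L > 0"
  shows "cstar_invertible sm st (sm L (1 - y))"
proof -
  define a where "a n = sm (1 / L) (\<Sum>k<n. y ^ k)" for n
  have "sm L (1 - y) * a n = (1 - y) * (\<Sum>k<n. y ^ k)"
    and "a n * sm L (1 - y) = (\<Sum>k<n. y ^ k) * (1 - y)" for n
    using L by (simp_all add: a_def sm_one_scalar flip: sm_mult_left sm_mult_right sm_mult_scalar)
  then have inverse: "sm L (1 - y) * a n - 1 = - (y ^ n)" "a n * sm L (1 - y) - 1 = - (y ^ n)" for n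
    by (simp_all add: one_minus_mult_geometric_sum)
  have "sa_norm sm st (a m - a n) \<le> real_of_rat (1 / L * r ^ n / (1 - r))" if "n \<le> m" for m n
  proof -
    have "(\<Sum>k<m. y ^ k) = (\<Sum>k<n. y ^ k) + (\<Sum>k\<in>{n..<m}. y ^ k)"
      using sum.atLeastLessThan_concat[of 0 n m "\<lambda>k. y ^ k"] that by (simp add: atLeast0LessThan)
    then have "a m - a n = sm (1 / L) (\<Sum>k\<in>{n..<m}. y ^ k)"
      by (simp add: a_def sm_add)
    then show ?thesis
      using sa_norm_sm_geometric_tail_le[OF y ry r, of "1 / L"] L that by simp
  qed
  moreover have "(\<lambda>n. real_of_rat (1 / L * r ^ n / (1 - r))) \<longlonglongrightarrow> 0"
    using r by (simp add: of_rat_mult of_rat_divide of_rat_power tendsto_divide_zero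
        tendsto_mult_right_zero LIMSEQ_power_zero)
  ultimately have "sa_cauchy sm st a"
    by (rule sa_cauchyI[rotated])
  moreover have "sa_cauchy sm st (\<lambda>n. 0)"
    using sa_norm_zero by (simp add: sa_cauchy_def)
  moreover have "(\<lambda>n. sa_norm sm st (y ^ n)) \<longlonglongrightarrow> 0"
    using sa_norm_power_tendsto_zero[OF y ry r] .
  ultimately show ?thesis
    unfolding cstar_invertible_def
    by (intro exI[of _ a] exI[of _ "\<lambda>n. 0"]) (simp add: inverse sa_norm_minus sa_norm_zero)
qed

end

locale archimedean_star_algebra = star_algebra +
  assumes archimedean: "sa_archimedean sm st"
begin

lemma sa_normsq_finite: "sa_normsq sm st z < \<infinity>"
  using archimedean sa_archimedean_def by blast

lemma hermitian_square_le_const: "\<exists>K>0. sa_pos st (sm K 1 - st z * z)"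
proof -
  have "{ereal (real_of_rat \<alpha>) | \<alpha>. \<alpha> > 0 \<and> sa_le st (st z * z) (sm \<alpha> 1)} \<noteq> {}"
    (is "?bounds \<noteq> {}")
  proof
    assume "?bounds = {}"
    then have "sa_normsq sm st z = \<infinity>"
      unfolding sa_normsq_def by (simp only: Inf_empty top_ereal_def)
    with sa_normsq_finite[of z] show False
      by simp
  qed
  then show ?thesis
    unfolding sa_le_def by auto
qed

lemma hermitian_square_le_const_of_norm_less:
  assumes "s > 0" and "sa_norm sm st z < real_of_rat s"
  shows "\<exists>c>0. c < s\<^sup>2 \<and> sa_pos st (sm c 1 - st z * z)"
proof -
  obtain t where t: "sa_normsq sm st z = ereal t" "t \<ge> 0"
    using sa_normsq_finite[of z] sa_normsq_nonneg[of z] by (cases "sa_normsq sm st z") auto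
  have "sqrt t < real_of_rat s"
    using assms(2) t unfolding sa_norm_def by simp
  then have "t < (real_of_rat s)\<^sup>2"
    by (meson not_less real_le_rsqrt)
  then have "sa_normsq sm st z < ereal (real_of_rat (s\<^sup>2))"
    using t by (simp add: of_rat_power)
  then obtain c where "c > 0" "sa_pos st (sm c 1 - st z * z)" "real_of_rat c < real_of_rat (s\<^sup>2)"
    unfolding sa_normsq_def Inf_less_iff sa_le_def by auto
  then show ?thesis
    by (auto simp: of_rat_less)
qed

text \<open>Twice \<open>L - x\<close> with \<open>L = (N + 1)/2\<close> is \<open>(N - x\<^sup>2) + (x - 1)\<^sup>2\<close>.\<close>

lemma sa_pos_le_const:
  assumes x: "sa_pos st x"
  shows "\<exists>L>0. sa_pos st (sm L 1 - x)"
proof -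
  have hx: "st x = x"
    using sa_pos_hermitian x by blast
  obtain N where N: "N > 0" "sa_pos st (sm N 1 - st x * x)"
    using hermitian_square_le_const by blast
  define L where "L = (N + 1) / 2"
  have "2 * L = N + 1"
    by (simp add: L_def)
  then have "sm 2 (sm L 1) = sm (N + 1) (1::'a)"
    by (simp flip: sm_mult_scalar)
  then have "sm 2 (sm L 1 - x) = sm N 1 + 1 - (x + x)"
    using sm_add_scalar[of 1 1 x] sm_add_scalar[of N 1 1]
    by (simp add: sm_diff sm_one_scalar)
  also have "\<dots> = (sm N 1 - st x * x) + st (x - 1) * (x - 1)"
    by (simp add: hx st_diff st_one algebra_simps)
  finally have "sa_pos st (sm 2 (sm L 1 - x))"
    using sa_pos_add[OF N(2) sa_pos_hermitian_square] by simp
  then have "sa_pos st (sm L 1 - x)"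
    using sa_pos_sm_cancel[of 2] by simp
  moreover have "L > 0"
    using N(1) L_def by simp
  ultimately show ?thesis
    by blast
qed

text \<open>With \<open>f = u - 1\<close>, \<open>f\<^sup>* f \<le> c < 1/4\<close> and \<open>v = 2 f + 1\<close> one has
  \<open>4 u\<^sup>* u - 1 = 2 v\<^sup>* v + 4 (c - f\<^sup>* f) + (1 - 4 c)\<close>.\<close>

lemma quarter_le_hermitian_square_of_norm_less:
  assumes "sa_norm sm st (u - 1) < 1 / 2"
  shows "sa_pos st (st u * u - sm (1 / 4) 1)"
proof -
  define f where "f = u - 1"
  obtain c where c: "c > 0" "c < 1 / 4" "sa_pos st (sm c 1 - st f * f)"
    using hermitian_square_le_const_of_norm_less[of "1 / 2" f] assms
    by (auto simp: f_def of_rat_divide power2_eq_square)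
  define v where "v = f + f + 1"
  have four: "sm 4 w = w + w + w + w" for w
    using sm_add_scalar[of 2 2 w] sm_add_scalar[of 1 1 w] by (simp add: sm_one_scalar)
  have "sm 4 (sm c 1) + sm (1 - 4 * c) 1 = (1::'a)"
    by (simp add: sm_one_scalar flip: sm_mult_scalar sm_add_scalar)
  then have "sm 4 (sm c 1 - st f * f) + sm (1 - 4 * c) 1
      = 1 - (st f * f + st f * f + st f * f + st f * f)"
    using four[of "st f * f"] by (simp add: sm_diff algebra_simps)
  moreover have "u = 1 + f" and "st u = 1 + st f"
    by (simp_all add: f_def st_add[of 1 "u - 1", simplified] st_one)
  ultimately have "sm 4 (st u * u) - 1
      = st v * v + st v * v + (sm 4 (sm c 1 - st f * f) + sm (1 - 4 * c) 1)"
    by (simp add: four v_def st_add st_one algebra_simps)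
  then have "sa_pos st (sm 4 (st u * u) - 1)"
    using c by (simp add: sa_pos_add sa_pos_hermitian_square sa_pos_sm sa_pos_const)
  then have "sa_pos st (sm (1 / 4) (sm 4 (st u * u) - 1))"
    by (simp add: sa_pos_sm)
  then show ?thesis
    by (simp add: sm_diff sm_one_scalar flip: sm_mult_scalar)
qed

lemma square_bounded_below_of_approx_left_inverse:
  assumes hx: "st x = x" and b: "sa_norm sm st (b * x - 1) < 1 / 2"
  shows "\<exists>\<epsilon>>0. sa_pos st (x * x - sm \<epsilon> 1)"
proof -
  obtain K where K: "K > 0" "sa_pos st (sm K 1 - st b * b)"
    using hermitian_square_le_const by blast
  have "st x * (sm K 1 - st b * b) * x = sm K (x * x) - st (b * x) * (b * x)"
    by (simp add: hx st_mult algebra_simps sm_mult_left[symmetric]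
        sm_eq_mult_const[of K x, symmetric])
  then have "sa_pos st (sm K (x * x) - st (b * x) * (b * x))"
    using sa_pos_conj[OF K(2), of x] by simp
  then have "sa_pos st (sm K (x * x) - sm (1 / 4) 1)"
    using sa_pos_add quarter_le_hermitian_square_of_norm_less[OF b] by fastforce
  moreover have "sm K (x * x) - sm (1 / 4) 1 = sm K (x * x - sm (1 / (4 * K)) 1)"
    using K by (simp add: sm_diff flip: sm_mult_scalar)
  ultimately have "sa_pos st (x * x - sm (1 / (4 * K)) 1)"
    using sa_pos_sm_cancel K(1) by metis
  then show ?thesis
    using K(1) by (intro exI[of _ "1 / (4 * K)"]) simp
qed

text \<open>If \<open>0 \<le> x \<le> L\<close> then \<open>x\<^sup>2 \<le> L x\<close>, so a lower bound on \<open>x\<^sup>2\<close> bounds \<open>x\<close> from below.\<close>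

lemma sa_pos_bounded_below_of_square_bounded_below:
  assumes x: "sa_pos st x" and \<epsilon>: "\<epsilon> > 0" "sa_pos st (x * x - sm \<epsilon> 1)"
  shows "\<exists>\<alpha>>0. sa_pos st (x - sm \<alpha> 1)"
proof -
  obtain L where L: "L > 0" "sa_pos st (sm L 1 - x)"
    using sa_pos_le_const[OF x] by blast
  have "x * (sm L 1 - x) + (x * x - sm \<epsilon> 1) = sm L (x - sm (\<epsilon> / L) 1)"
    using L(1)
    by (simp add: right_diff_distrib sm_diff sm_eq_mult_const[of L x] flip: sm_mult_scalar)
  moreover have "sa_pos st (x * (sm L 1 - x) + (x * x - sm \<epsilon> 1))"
    using sa_pos_add[OF sa_pos_mult_const_minus[OF x L(2,1)] \<epsilon>(2)] .
  ultimately have "sa_pos st (x - sm (\<epsilon> / L) 1)"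
    using sa_pos_sm_cancel L(1) by metis
  then show ?thesis
    using \<epsilon>(1) L(1) by (intro exI[of _ "\<epsilon> / L"]) simp
qed

lemma bounded_below_if_cstar_invertible:
  assumes x: "sa_pos st x" and inv: "cstar_invertible sm st x"
  shows "\<exists>\<alpha>>0. sa_pos st (x - sm \<alpha> 1)"
proof -
  obtain a where "(\<lambda>n. sa_norm sm st (a n * x - 1)) \<longlonglongrightarrow> 0"
    using inv unfolding cstar_invertible_def by blast
  then have "eventually (\<lambda>n. sa_norm sm st (a n * x - 1) < 1 / 2) sequentially"
    by (rule order_tendstoD(2)) simp
  then obtain n where "sa_norm sm st (a n * x - 1) < 1 / 2"
    by (auto simp: eventually_sequentially)
  then obtain \<epsilon> where "\<epsilon> > 0" "sa_pos st (x * x - sm \<epsilon> 1)"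
    using square_bounded_below_of_approx_left_inverse sa_pos_hermitian[OF x] by blast
  then show ?thesis
    using sa_pos_bounded_below_of_square_bounded_below[OF x] by blast
qed

lemma cstar_invertible_if_bounded_below:
  assumes x: "sa_pos st x" and \<alpha>: "\<alpha> > 0" "sa_pos st (x - sm \<alpha> 1)"
  shows "cstar_invertible sm st x"
proof -
  obtain L0 where L0: "L0 > 0" "sa_pos st (sm L0 1 - x)"
    using sa_pos_le_const[OF x] by blast
  define L where "L = L0 + \<alpha>"
  define y where "y = sm (1 / L) (sm L 1 - x)"
  define r where "r = 1 - \<alpha> / L"
  have L: "L > 0" and r: "0 < r" "r < 1"
    using L0(1) \<alpha>(1) by (simp_all add: L_def r_def)
  have "sm L 1 - x = (sm L0 1 - x) + sm \<alpha> 1"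
    by (simp add: L_def sm_add_scalar)
  then have "sa_pos st (sm L 1 - x)"
    using sa_pos_add[OF L0(2) sa_pos_const[of \<alpha>]] \<alpha>(1) by (simp add: algebra_simps)
  then have y: "sa_pos st y"
    unfolding y_def using L by (simp add: sa_pos_sm)
  have "sm r 1 - y = sm (1 / L) (x - sm \<alpha> 1)"
    using L by (simp add: y_def r_def sm_diff sm_diff_scalar sm_one_scalar sm_inverse_cancel
        flip: sm_mult_scalar)
  then have ry: "sa_pos st (sm r 1 - y)"
    using sa_pos_sm[OF \<alpha>(2)] L by simp
  have "x = sm L (1 - y)"
    using L by (simp add: y_def sm_diff sm_one_scalar flip: sm_mult_scalar)
  then show ?thesis
    using cstar_invertible_sm_one_minus[OF y ry r L] by simp
qed

end

theorem proposition2p9: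
  fixes sm :: "rat \<Rightarrow> 'a::ring_1 \<Rightarrow> 'a" and st :: "'a \<Rightarrow> 'a" and x :: 'a
  assumes "star_alg sm st"
    and "sa_archimedean sm st"
    and "sa_pos st x"
  shows "cstar_invertible sm st x \<longleftrightarrow> (\<exists>\<alpha>::rat. \<alpha> > 0 \<and> sa_pos st (x - sm \<alpha> 1))"
proof -
  interpret archimedean_star_algebra sm st
    using assms(1,2) by unfold_locales
  show ?thesis
    using bounded_below_if_cstar_invertible cstar_invertible_if_bounded_below assms(3) by blast
qed

end
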